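(* Let $A$ be a T-brace and suppose that $a\in\zeta_n(\star,A)$ for some natural number $n$. Let $a_1=a$ and $a_{i+1}=a_i\star a_i$ for all $i\geq 1$. Then (i) $\mathbf{br}(a)$ is an ideal of $A$ and $\mathbf{br}(a)=\langle a_1\rangle+\langle a_2\rangle+\dots+\langle a_n\rangle$; (ii) if the additive group of $\zeta(\star,A)$ is torsion-free, then $\mathbf{br}(a)=\langle a_1\rangle\oplus\langle a_2\rangle\oplus\dots\oplus\langle a_n\rangle$. Here $\langle x\rangle$ denotes the cyclic subgroup of $(A,+)$ generated by $x$.
   Context: A (left) brace is a set $A$ with two operations $+$ and $\cdot$ such that $(A,+)$ is an abelian group, $(A,\cdot)$ is a group, and $a(b+c)=ab+ac-a$ for all $a,b,c\in A$. Put $a\star b=ab-a-b$. A subbrace is a subset which is a subgroup of both $(A,+)$ and $(A,\cdot)$; $\mathbf{br}(a)$ is the intersection of all subbraces containing $a$. A subbrace $L$ is an ideal if $a\star z, z\star a\in L$ for all $a\in A$, $z\in L$, and then the quotient brace $A/L$ is defined. $A$ is a T-brace if whenever $I$ is an ideal of $J$ and $J$ is an ideal of $A$, then $I$ is an ideal of $A$. The $\star$-center is $\zeta(\star,A)=\{a: a\star x=x\star a=0\ \forall x\}$; the upper $\star$-central series is $\zeta_0(\star,A)=0$, $\zeta_{n+1}(\star,A)/\zeta_n(\star,A)=\zeta(\star,A/\zeta_n(\star,A))$. *)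

theory Defs
  imports "HOL-Algebra.Algebra"
begin

text \<open>A (left) brace given by its carrier, addition, multiplication and the two
neutral elements (the brace axioms force them to coincide).\<close>

record 'a brace_struct =
  bcar  :: "'a set"
  badd  :: "'a \<Rightarrow> 'a \<Rightarrow> 'a"
  bmul  :: "'a \<Rightarrow> 'a \<Rightarrow> 'a"
  bzero :: 'a
  bone  :: 'a

definition add_group :: "('a, 'b) brace_struct_scheme \<Rightarrow> 'a monoid" where
  "add_group B = \<lparr>carrier = bcar B, monoid.mult = badd B, one = bzero B\<rparr>"

definition mul_group :: "('a, 'b) brace_struct_scheme \<Rightarrow> 'a monoid" where
  "mul_group B = \<lparr>carrier = bcar B, monoid.mult = bmul B, one = bone B\<rparr>"

definition bneg :: "('a, 'b) brace_struct_scheme \<Rightarrow> 'a \<Rightarrow> 'a" where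
  "bneg B x = inv\<^bsub>add_group B\<^esub> x"

definition bsub :: "('a, 'b) brace_struct_scheme \<Rightarrow> 'a \<Rightarrow> 'a \<Rightarrow> 'a" where
  "bsub B x y = badd B x (bneg B y)"

definition is_brace :: "('a, 'b) brace_struct_scheme \<Rightarrow> bool" where
  "is_brace B \<longleftrightarrow> comm_group (add_group B) \<and> group (mul_group B) \<and>
     (\<forall>a\<in>bcar B. \<forall>b\<in>bcar B. \<forall>c\<in>bcar B.
        bmul B a (badd B b c) = bsub B (badd B (bmul B a b) (bmul B a c)) a)"

definition star :: "('a, 'b) brace_struct_scheme \<Rightarrow> 'a \<Rightarrow> 'a \<Rightarrow> 'a" where
  "star B a b = bsub B (bsub B (bmul B a b) a) b"

definition subbrace :: "'a set \<Rightarrow> ('a, 'b) brace_struct_scheme \<Rightarrow> bool" where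
  "subbrace S B \<longleftrightarrow> subgroup S (add_group B) \<and> subgroup S (mul_group B)"

definition br :: "('a, 'b) brace_struct_scheme \<Rightarrow> 'a \<Rightarrow> 'a set" where
  "br B a = \<Inter> {S. subbrace S B \<and> a \<in> S}"

definition brace_ideal :: "'a set \<Rightarrow> ('a, 'b) brace_struct_scheme \<Rightarrow> bool" where
  "brace_ideal L B \<longleftrightarrow> subbrace L B \<and>
     (\<forall>a\<in>bcar B. \<forall>z\<in>L. star B a z \<in> L \<and> star B z a \<in> L)"

definition restrict_brace :: "('a, 'b) brace_struct_scheme \<Rightarrow> 'a set \<Rightarrow> 'a brace_struct" where
  "restrict_brace B J = \<lparr>bcar = J, badd = badd B, bmul = bmul B, bzero = bzero B, bone = bone B\<rparr>"

definition T_brace :: "('a, 'b) brace_struct_scheme \<Rightarrow> bool" where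
  "T_brace B \<longleftrightarrow> (\<forall>I J. brace_ideal J B \<and> brace_ideal I (restrict_brace B J)
                        \<longrightarrow> brace_ideal I B)"

definition bcoset :: "('a, 'b) brace_struct_scheme \<Rightarrow> 'a \<Rightarrow> 'a set \<Rightarrow> 'a set" where
  "bcoset B a L = {badd B a l | l. l \<in> L}"

definition quot_add :: "('a, 'b) brace_struct_scheme \<Rightarrow> 'a set \<Rightarrow> 'a set \<Rightarrow> 'a set" where
  "quot_add B U V = {badd B u v | u v. u \<in> U \<and> v \<in> V}"

definition quot_mul :: "('a, 'b) brace_struct_scheme \<Rightarrow> 'a set \<Rightarrow> 'a set \<Rightarrow> 'a set" where
  "quot_mul B U V = {bmul B u v | u v. u \<in> U \<and> v \<in> V}"

definition quot_brace :: "('a, 'b) brace_struct_scheme \<Rightarrow> 'a set \<Rightarrow> 'a set brace_struct" where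
  "quot_brace B L =
     \<lparr>bcar = {bcoset B a L | a. a \<in> bcar B},
      badd = quot_add B,
      bmul = quot_mul B,
      bzero = L,
      bone = bcoset B (bone B) L\<rparr>"

definition star_center :: "('a, 'b) brace_struct_scheme \<Rightarrow> 'a set" where
  "star_center B = {a \<in> bcar B. \<forall>x\<in>bcar B. star B a x = bzero B \<and> star B x a = bzero B}"

primrec upper_star_center :: "('a, 'b) brace_struct_scheme \<Rightarrow> nat \<Rightarrow> 'a set" where
  "upper_star_center B 0 = {bzero B}"
| "upper_star_center B (Suc n) =
     {a \<in> bcar B. bcoset B a (upper_star_center B n)
                    \<in> star_center (quot_brace B (upper_star_center B n))}"

definition cyc :: "('a, 'b) brace_struct_scheme \<Rightarrow> 'a \<Rightarrow> 'a set" where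
  "cyc B x = generate (add_group B) {x}"

definition subgroup_sum :: "('a, 'b) brace_struct_scheme \<Rightarrow> (nat \<Rightarrow> 'a set) \<Rightarrow> nat set \<Rightarrow> 'a set" where
  "subgroup_sum B H I =
     {finprod (add_group B) x I | x. \<forall>i\<in>I. x i \<in> H i}"

definition sum_is_direct :: "('a, 'b) brace_struct_scheme \<Rightarrow> (nat \<Rightarrow> 'a set) \<Rightarrow> nat set \<Rightarrow> bool" where
  "sum_is_direct B H I \<longleftrightarrow>
     (\<forall>x. (\<forall>i\<in>I. x i \<in> H i) \<and> finprod (add_group B) x I = bzero B
          \<longrightarrow> (\<forall>i\<in>I. x i = bzero B))"

definition add_torsion_free :: "('a, 'b) brace_struct_scheme \<Rightarrow> 'a set \<Rightarrow> bool" where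
  "add_torsion_free B S \<longleftrightarrow>
     (\<forall>x\<in>S. \<forall>k::nat. k > 0 \<and> x [^]\<^bsub>add_group B\<^esub> k = bzero B \<longrightarrow> x = bzero B)"

end

theory Submission
  imports Defs
begin

text \<open>For an ideal \<open>L\<close>, the preimage \<open>center_mod L\<close> of the \<open>\<star>\<close>-centre of \<open>A/L\<close> is again an
  ideal, so \<open>\<zeta>\<^sub>n\<^sub>+\<^sub>1 = center_mod \<zeta>\<^sub>n\<close> and every \<open>\<zeta>\<^sub>n\<close> is an ideal. For a subbrace \<open>H\<close>,
  \<open>H + L\<close> is an ideal of \<open>H + center_mod L\<close>; hence a subbrace \<open>H \<subseteq> \<zeta>\<^sub>n\<close> is subnormal through
  \<open>H = H + \<zeta>\<^sub>0 \<subseteq> H + \<zeta>\<^sub>1 \<subseteq> \<dots> \<subseteq> H + \<zeta>\<^sub>n = \<zeta>\<^sub>n\<close>, and in a T-brace it is an ideal.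
  In particular \<open>br(a \<star> a)\<close> is an ideal for \<open>a \<in> \<zeta>\<^sub>n\<close>. Modulo an ideal containing \<open>a \<star> a\<close> the
  powers \<open>a\<^sup>k\<close> agree with the multiples \<open>k a\<close>, so \<open>\<langle>a\<rangle> + br(a \<star> a)\<close> is a subbrace and equals
  \<open>br(a)\<close>; since \<open>a \<star> a \<in> \<zeta>\<^sub>n\<^sub>-\<^sub>1\<close>, part (i) follows by induction on \<open>n\<close>.

  For (ii), torsion-freeness of \<open>\<zeta>\<^sub>1 = \<zeta>(\<star>,A)\<close> propagates to all factors \<open>\<zeta>\<^sub>k\<^sub>+\<^sub>1/\<zeta>\<^sub>k\<close>, because
  \<open>a \<mapsto> a \<star> x\<close> is additive modulo \<open>\<zeta>\<^sub>k\<close> on \<open>\<zeta>\<^sub>k\<^sub>+\<^sub>2\<close>. If a nonzero multiple of \<open>a \<in> \<zeta>\<^sub>n\<close> lies in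
  \<open>br(a \<star> a) \<subseteq> \<zeta>\<^sub>n\<^sub>-\<^sub>1\<close>, then \<open>a \<in> \<zeta>\<^sub>n\<^sub>-\<^sub>1\<close>, and descending further \<open>a = 0\<close>. Thus
  \<open>\<langle>a\<rangle> \<inter> br(a \<star> a) = 0\<close>, and directness again follows by induction.\<close>

lemma atLeastAtMost_Suc_insert: "{1..Suc n} = insert 1 (Suc ` {1..n})"
  by (auto simp: image_Suc_atLeastAtMost)

lemma ball_atLeastAtMost_Suc: "(\<forall>i\<in>{1..Suc n}. P i) \<longleftrightarrow> P 1 \<and> (\<forall>i\<in>{1..n}. P (Suc i))"
  unfolding atLeastAtMost_Suc_insert by (auto simp del: image_Suc_atLeastAtMost)

section \<open>Brace arithmetic\<close>

locale brace =
  fixes B :: "('a, 'b) brace_struct_scheme"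
  assumes is_brace: "is_brace B"
begin

abbreviation A where "A \<equiv> bcar B"
abbreviation add (infixl "\<boxplus>" 65) where "x \<boxplus> y \<equiv> badd B x y"
abbreviation mul (infixl "\<boxtimes>" 70) where "x \<boxtimes> y \<equiv> bmul B x y"
abbreviation star_op (infixl "\<star>" 75) where "x \<star> y \<equiv> star B x y"
abbreviation zero where "zero \<equiv> bzero B"
abbreviation neg where "neg x \<equiv> bneg B x"
abbreviation minv where "minv x \<equiv> inv\<^bsub>mul_group B\<^esub> x"

sublocale additive: comm_group "add_group B"
  using is_brace by (simp add: is_brace_def)

sublocale multiplicative: group "mul_group B"
  using is_brace by (simp add: is_brace_def)

lemma add_group_simps [simp]:
  "carrier (add_group B) = A" "x \<otimes>\<^bsub>add_group B\<^esub> y = x \<boxplus> y" "\<one>\<^bsub>add_group B\<^esub> = zero"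
  by (simp_all add: add_group_def)

lemma mul_group_simps [simp]:
  "carrier (mul_group B) = A" "x \<otimes>\<^bsub>mul_group B\<^esub> y = x \<boxtimes> y" "\<one>\<^bsub>mul_group B\<^esub> = bone B"
  by (simp_all add: mul_group_def)

lemma neg_eq_inv: "neg x = inv\<^bsub>add_group B\<^esub> x"
  by (simp add: bneg_def)

lemma add_closed [simp, intro]: "x \<in> A \<Longrightarrow> y \<in> A \<Longrightarrow> x \<boxplus> y \<in> A"
  using additive.m_closed by simp

lemma mul_closed [simp, intro]: "x \<in> A \<Longrightarrow> y \<in> A \<Longrightarrow> x \<boxtimes> y \<in> A"
  using multiplicative.m_closed by simp

lemma neg_closed [simp, intro]: "x \<in> A \<Longrightarrow> neg x \<in> A"
  using additive.inv_closed by (simp add: neg_eq_inv)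

lemma minv_closed [simp, intro]: "x \<in> A \<Longrightarrow> minv x \<in> A"
  using multiplicative.inv_closed by simp

lemma zero_closed [simp, intro]: "zero \<in> A"
  using additive.one_closed by simp

lemma add_assoc: "x \<in> A \<Longrightarrow> y \<in> A \<Longrightarrow> z \<in> A \<Longrightarrow> x \<boxplus> y \<boxplus> z = x \<boxplus> (y \<boxplus> z)"
  using additive.m_assoc by simp

lemma add_comm: "x \<in> A \<Longrightarrow> y \<in> A \<Longrightarrow> x \<boxplus> y = y \<boxplus> x"
  using additive.m_comm by simp

lemma add_left_commute: "x \<in> A \<Longrightarrow> y \<in> A \<Longrightarrow> z \<in> A \<Longrightarrow> x \<boxplus> (y \<boxplus> z) = y \<boxplus> (x \<boxplus> z)"
  using additive.m_lcomm by simp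

lemmas add_ac = add_assoc add_comm add_left_commute

lemma add_zero [simp]: "x \<in> A \<Longrightarrow> x \<boxplus> zero = x"
  using additive.r_one by simp

lemma zero_add [simp]: "x \<in> A \<Longrightarrow> zero \<boxplus> x = x"
  using additive.l_one by simp

lemma add_neg [simp]: "x \<in> A \<Longrightarrow> x \<boxplus> neg x = zero"
  using additive.r_inv by (simp add: neg_eq_inv)

lemma neg_add [simp]: "x \<in> A \<Longrightarrow> neg x \<boxplus> x = zero"
  using additive.l_inv by (simp add: neg_eq_inv)

lemma add_neg_cancel_left [simp]: "x \<in> A \<Longrightarrow> y \<in> A \<Longrightarrow> x \<boxplus> (neg x \<boxplus> y) = y"
  by (simp flip: add_assoc)

lemma neg_add_cancel_left [simp]: "x \<in> A \<Longrightarrow> y \<in> A \<Longrightarrow> neg x \<boxplus> (x \<boxplus> y) = y"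
  by (simp flip: add_assoc)

lemma neg_neg [simp]: "x \<in> A \<Longrightarrow> neg (neg x) = x"
  using additive.inv_inv by (simp add: neg_eq_inv)

lemma neg_add_distrib [simp]: "x \<in> A \<Longrightarrow> y \<in> A \<Longrightarrow> neg (x \<boxplus> y) = neg x \<boxplus> neg y"
  using additive.inv_mult by (simp add: neg_eq_inv)

lemma neg_zero [simp]: "neg zero = zero"
  using additive.inv_one by (simp add: neg_eq_inv)

lemma neg_unique: "x \<in> A \<Longrightarrow> y \<in> A \<Longrightarrow> x \<boxplus> y = zero \<Longrightarrow> x = neg y"
  using additive.inv_equality[of x y] by (simp add: neg_eq_inv)

lemma mul_assoc: "x \<in> A \<Longrightarrow> y \<in> A \<Longrightarrow> z \<in> A \<Longrightarrow> x \<boxtimes> y \<boxtimes> z = x \<boxtimes> (y \<boxtimes> z)"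
  using multiplicative.m_assoc by simp

lemma mul_add_distrib:
  "x \<in> A \<Longrightarrow> y \<in> A \<Longrightarrow> z \<in> A \<Longrightarrow> x \<boxtimes> (y \<boxplus> z) = x \<boxtimes> y \<boxplus> x \<boxtimes> z \<boxplus> neg x"
  using is_brace by (simp add: is_brace_def bsub_def)

lemma mul_zero [simp]:
  assumes "x \<in> A"
  shows "x \<boxtimes> zero = x"
proof -
  have "x \<boxtimes> zero \<boxplus> zero = x \<boxtimes> zero \<boxplus> (x \<boxtimes> zero \<boxplus> neg x)"
    using mul_add_distrib[OF assms zero_closed zero_closed] assms by (simp add: add_assoc)
  then have "x \<boxtimes> zero \<boxplus> neg x = zero"
    using additive.l_cancel[of "x \<boxtimes> zero" zero "x \<boxtimes> zero \<boxplus> neg x"] assms by simp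
  then show ?thesis
    using neg_unique[of "x \<boxtimes> zero" "neg x"] assms by simp
qed

lemma bone_eq_zero [simp]: "bone B = zero"
  using mul_zero[of "bone B"] multiplicative.l_one[of zero] multiplicative.one_closed by simp

lemma zero_mul [simp]: "x \<in> A \<Longrightarrow> zero \<boxtimes> x = x"
  using multiplicative.l_one by simp

lemma mul_minv [simp]: "x \<in> A \<Longrightarrow> x \<boxtimes> minv x = zero"
  using multiplicative.r_inv by simp

lemma minv_mul [simp]: "x \<in> A \<Longrightarrow> minv x \<boxtimes> x = zero"
  using multiplicative.l_inv by simp

lemma mul_minv_cancel_left [simp]: "x \<in> A \<Longrightarrow> z \<in> A \<Longrightarrow> x \<boxtimes> (minv x \<boxtimes> z) = z"
  by (simp flip: mul_assoc)

lemma minv_mul_cancel_left [simp]: "x \<in> A \<Longrightarrow> z \<in> A \<Longrightarrow> minv x \<boxtimes> (x \<boxtimes> z) = z"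
  by (simp flip: mul_assoc)

lemma star_unfold: "x \<star> y = x \<boxtimes> y \<boxplus> neg x \<boxplus> neg y"
  by (simp add: star_def bsub_def)

lemma star_closed [simp, intro]: "x \<in> A \<Longrightarrow> y \<in> A \<Longrightarrow> x \<star> y \<in> A"
  by (simp add: star_unfold)

lemma mul_eq_add_star: "x \<in> A \<Longrightarrow> y \<in> A \<Longrightarrow> x \<boxtimes> y = x \<boxplus> y \<boxplus> x \<star> y"
  by (simp add: star_unfold add_ac)

lemma star_zero_right [simp]: "x \<in> A \<Longrightarrow> x \<star> zero = zero"
  by (simp add: star_unfold)

lemma star_zero_left [simp]: "x \<in> A \<Longrightarrow> zero \<star> x = zero"
  by (simp add: star_unfold)

lemma star_add_right: "x \<in> A \<Longrightarrow> y \<in> A \<Longrightarrow> z \<in> A \<Longrightarrow> x \<star> (y \<boxplus> z) = x \<star> y \<boxplus> x \<star> z"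
  by (simp add: star_unfold mul_add_distrib add_ac)

lemma star_neg_right: "x \<in> A \<Longrightarrow> y \<in> A \<Longrightarrow> x \<star> neg y = neg (x \<star> y)"
  using star_add_right[of x "neg y" y] by (intro neg_unique) auto

definition lam :: "'a \<Rightarrow> 'a \<Rightarrow> 'a" where
  "lam x y = x \<boxtimes> y \<boxplus> neg x"

lemma lam_closed [simp]: "x \<in> A \<Longrightarrow> y \<in> A \<Longrightarrow> lam x y \<in> A"
  by (simp add: lam_def)

lemma lam_add: "x \<in> A \<Longrightarrow> y \<in> A \<Longrightarrow> z \<in> A \<Longrightarrow> lam x (y \<boxplus> z) = lam x y \<boxplus> lam x z"
  by (simp add: lam_def mul_add_distrib add_ac)

lemma lam_neg: "x \<in> A \<Longrightarrow> y \<in> A \<Longrightarrow> lam x (neg y) = neg (lam x y)"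
  using lam_add[of x "neg y" y] by (intro neg_unique) (auto simp: lam_def)

lemma lam_mul:
  assumes "x \<in> A" "y \<in> A" "z \<in> A"
  shows "lam (x \<boxtimes> y) z = lam x (lam y z)"
proof -
  have "lam x (lam y z) = lam x (y \<boxtimes> z) \<boxplus> neg (lam x y)"
    using assms by (simp add: lam_def[of y z] lam_add lam_neg)
  then show ?thesis
    using assms by (simp add: lam_def mul_assoc add_ac)
qed

lemma star_eq_lam: "x \<in> A \<Longrightarrow> y \<in> A \<Longrightarrow> x \<star> y = lam x y \<boxplus> neg y"
  by (simp add: star_unfold lam_def)

lemma star_mul_left:
  "x \<in> A \<Longrightarrow> y \<in> A \<Longrightarrow> z \<in> A \<Longrightarrow> (x \<boxtimes> y) \<star> z = x \<star> (y \<star> z) \<boxplus> x \<star> z \<boxplus> y \<star> z"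
  by (simp add: star_eq_lam lam_mul lam_add lam_neg add_ac)

lemma add_eq_mul:
  assumes "x \<in> A" "c \<in> A"
  shows "x \<boxplus> c = x \<boxtimes> (c \<boxplus> minv x \<star> c)"
proof -
  have mul_eq_lam: "x \<boxtimes> w = x \<boxplus> lam x w" if "w \<in> A" for w
    using assms that by (simp add: lam_def add_ac)
  have "x \<boxtimes> (c \<boxplus> minv x \<star> c) = x \<boxplus> lam x (lam (minv x) c)"
    using assms by (simp add: mul_eq_lam star_eq_lam add_ac)
  also have "\<dots> = x \<boxplus> lam zero c"
    using assms by (simp flip: lam_mul)
  finally show ?thesis
    using assms by (simp add: lam_def)
qed

lemma minv_eq: "a \<in> A \<Longrightarrow> minv a = neg a \<boxplus> neg (minv a \<star> a)"
  using mul_eq_add_star[of "minv a" a] neg_unique[of "minv a" "a \<boxplus> minv a \<star> a"]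
  by (simp add: add_assoc)

lemma neg_eq_minv_add: "a \<in> A \<Longrightarrow> neg a = minv a \<boxplus> minv a \<star> a"
  using mul_eq_add_star[of "minv a" a] neg_unique[of "minv a \<boxplus> minv a \<star> a" a]
  by (simp add: add_ac)

section \<open>Subbraces, ideals and the relative \<open>\<star>\<close>-centre\<close>

lemma ideal_subbrace: "brace_ideal L B \<Longrightarrow> subbrace L B"
  by (simp add: brace_ideal_def)

context
  fixes H assumes H_subbrace: "subbrace H B"
begin

lemma subbrace_add_subgroup: "subgroup H (add_group B)"
  using H_subbrace by (simp add: subbrace_def)

lemma subbrace_mul_subgroup: "subgroup H (mul_group B)"
  using H_subbrace by (simp add: subbrace_def)

lemma subbrace_subset: "H \<subseteq> A"
  using subgroup.subset[OF subbrace_add_subgroup] by simp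

lemma subbrace_carrier: "h \<in> H \<Longrightarrow> h \<in> A"
  using subbrace_subset by auto

lemma subbrace_zero [simp]: "zero \<in> H"
  using subgroup.one_closed[OF subbrace_add_subgroup] by simp

lemma subbrace_add: "x \<in> H \<Longrightarrow> y \<in> H \<Longrightarrow> x \<boxplus> y \<in> H"
  using subgroup.m_closed[OF subbrace_add_subgroup] by simp

lemma subbrace_neg: "x \<in> H \<Longrightarrow> neg x \<in> H"
  using subgroup.m_inv_closed[OF subbrace_add_subgroup] by (simp add: neg_eq_inv)

lemma subbrace_mul: "x \<in> H \<Longrightarrow> y \<in> H \<Longrightarrow> x \<boxtimes> y \<in> H"
  using subgroup.m_closed[OF subbrace_mul_subgroup] by simp

lemma subbrace_minv: "x \<in> H \<Longrightarrow> minv x \<in> H"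
  using subgroup.m_inv_closed[OF subbrace_mul_subgroup] by simp

lemma subbrace_star: "x \<in> H \<Longrightarrow> y \<in> H \<Longrightarrow> x \<star> y \<in> H"
  using subbrace_mul subbrace_add subbrace_neg by (simp add: star_unfold)

end

context
  fixes L assumes L_ideal: "brace_ideal L B"
begin

lemmas ideal_subset = subbrace_subset[OF ideal_subbrace[OF L_ideal]]
  and ideal_carrier = subbrace_carrier[OF ideal_subbrace[OF L_ideal]]
  and ideal_zero [simp] = subbrace_zero[OF ideal_subbrace[OF L_ideal]]
  and ideal_add = subbrace_add[OF ideal_subbrace[OF L_ideal]]
  and ideal_neg = subbrace_neg[OF ideal_subbrace[OF L_ideal]]
  and ideal_mul = subbrace_mul[OF ideal_subbrace[OF L_ideal]]
  and ideal_minv = subbrace_minv[OF ideal_subbrace[OF L_ideal]]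

lemma ideal_star_left: "x \<in> A \<Longrightarrow> l \<in> L \<Longrightarrow> x \<star> l \<in> L"
  using L_ideal by (simp add: brace_ideal_def)

lemma ideal_star_right: "x \<in> A \<Longrightarrow> l \<in> L \<Longrightarrow> l \<star> x \<in> L"
  using L_ideal by (simp add: brace_ideal_def)

lemma ideal_middle_summand:
  assumes "p \<boxplus> q \<boxplus> r = zero" "p \<in> L" "r \<in> L" "q \<in> A"
  shows "q \<in> L"
proof -
  have "q = neg (p \<boxplus> r)"
    using assms ideal_carrier by (intro neg_unique) (auto simp: add_ac)
  then show ?thesis
    using assms ideal_neg ideal_add by simp
qed

lemma mul_ideal_eq_add: "x \<in> A \<Longrightarrow> l \<in> L \<Longrightarrow> \<exists>l'\<in>L. x \<boxtimes> l = x \<boxplus> l'"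
  using ideal_add ideal_star_left ideal_carrier mul_eq_add_star[of x l]
  by (intro bexI[of _ "l \<boxplus> x \<star> l"]) (auto simp: add_assoc)

lemma add_ideal_eq_mul: "x \<in> A \<Longrightarrow> l \<in> L \<Longrightarrow> \<exists>l'\<in>L. x \<boxplus> l = x \<boxtimes> l'"
  using ideal_add ideal_star_left ideal_carrier add_eq_mul[of x l]
  by (intro bexI[of _ "l \<boxplus> minv x \<star> l"]) auto

lemma ideal_conj:
  assumes "w \<in> A" "l \<in> L"
  shows "minv w \<boxtimes> l \<boxtimes> w \<in> L"
proof -
  have l: "l \<in> A"
    using assms ideal_carrier by auto
  obtain l' where "l' \<in> L" and "w \<boxplus> (l \<boxplus> l \<star> w) = w \<boxtimes> l'"
    using add_ideal_eq_mul[of w "l \<boxplus> l \<star> w"] assms ideal_add ideal_star_right by auto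
  moreover have "l \<boxtimes> w = w \<boxplus> (l \<boxplus> l \<star> w)"
    using mul_eq_add_star[OF l assms(1)] l assms by (simp add: add_ac)
  ultimately show ?thesis
    using assms l ideal_carrier by (simp add: mul_assoc)
qed

lemma ideal_conj': "w \<in> A \<Longrightarrow> l \<in> L \<Longrightarrow> w \<boxtimes> l \<boxtimes> minv w \<in> L"
  using ideal_conj[of "minv w" l] multiplicative.inv_inv[of w] by simp

lemma star_mul_ideal_left:
  assumes "u \<in> A" "x \<in> A" "c \<in> A" "c \<star> x \<in> L"
  shows "\<exists>l\<in>L. (u \<boxtimes> c) \<star> x = u \<star> x \<boxplus> l"
  using assms star_mul_left[of u c x] ideal_star_left ideal_add
  by (intro bexI[of _ "u \<star> (c \<star> x) \<boxplus> c \<star> x"]) (auto simp: add_ac)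

lemma star_add_ideal_left:
  assumes "u \<in> A" "x \<in> A" "l \<in> L"
  shows "\<exists>l'\<in>L. (u \<boxplus> l) \<star> x = u \<star> x \<boxplus> l'"
proof -
  obtain l1 where "l1 \<in> L" "u \<boxplus> l = u \<boxtimes> l1"
    using add_ideal_eq_mul assms by blast
  then show ?thesis
    using star_mul_ideal_left[of u x l1] assms ideal_carrier ideal_star_right by auto
qed

end

definition center_mod :: "'a set \<Rightarrow> 'a set" where
  "center_mod L = {a \<in> A. \<forall>x\<in>A. a \<star> x \<in> L \<and> x \<star> a \<in> L}"

lemma center_mod_subset: "center_mod L \<subseteq> A"
  by (auto simp: center_mod_def)

context
  fixes L assumes L_ideal: "brace_ideal L B"
begin

lemma ideal_subset_center_mod: "L \<subseteq> center_mod L"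
  using ideal_star_left[OF L_ideal] ideal_star_right[OF L_ideal] ideal_carrier[OF L_ideal]
  by (auto simp: center_mod_def)

lemma center_mod_add:
  assumes a: "a \<in> center_mod L" and b: "b \<in> center_mod L"
  shows "a \<boxplus> b \<in> center_mod L"
proof -
  have aA: "a \<in> A" and bA: "b \<in> A"
    using assms by (auto simp: center_mod_def)
  have "x \<star> (a \<boxplus> b) \<in> L" if "x \<in> A" for x
    using star_add_right[OF that aA bA] assms that ideal_add[OF L_ideal] by (simp add: center_mod_def)
  moreover have "(a \<boxplus> b) \<star> x \<in> L" if x: "x \<in> A" for x
  proof -
    \<comment> \<open>write \<open>a + b = a \<cdot> b'\<close> with \<open>b' = b + a\<^sup>-\<^sup>1 \<star> b \<equiv> b (mod L)\<close>\<close>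
    have "minv a \<star> b \<in> L"
      using assms by (simp add: center_mod_def)
    then obtain l where l: "l \<in> L" "(b \<boxplus> minv a \<star> b) \<star> x = b \<star> x \<boxplus> l"
      using star_add_ideal_left[OF L_ideal bA x] by blast
    then have "(b \<boxplus> minv a \<star> b) \<star> x \<in> L"
      using b x ideal_add[OF L_ideal] by (simp add: center_mod_def)
    moreover have "b \<boxplus> minv a \<star> b \<in> A"
      using aA bA by simp
    ultimately obtain l' where "l' \<in> L" "(a \<boxtimes> (b \<boxplus> minv a \<star> b)) \<star> x = a \<star> x \<boxplus> l'"
      using star_mul_ideal_left[OF L_ideal aA x] by blast
    then show ?thesis
      using add_eq_mul[OF aA bA] a x ideal_add[OF L_ideal] by (simp add: center_mod_def)
  qed
  ultimately show ?thesis
    using aA bA by (simp add: center_mod_def)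
qed

lemma center_mod_neg:
  assumes a: "a \<in> center_mod L"
  shows "neg a \<in> center_mod L"
proof -
  have aA: "a \<in> A"
    using assms by (auto simp: center_mod_def)
  have "x \<star> neg a \<in> L" if "x \<in> A" for x
    using star_neg_right[OF that aA] a that ideal_neg[OF L_ideal] by (simp add: center_mod_def)
  moreover have "neg a \<star> x \<in> L" if x: "x \<in> A" for x
  proof -
    have "minv a \<star> (a \<star> x) \<boxplus> minv a \<star> x \<boxplus> a \<star> x = zero"
      using star_mul_left[of "minv a" a x] aA x by simp
    then have "minv a \<star> x \<in> L"
      using ideal_middle_summand[OF L_ideal] ideal_star_left[OF L_ideal] a aA x
      by (simp add: center_mod_def)
    moreover obtain l where "l \<in> L" "(minv a \<boxplus> minv a \<star> a) \<star> x = minv a \<star> x \<boxplus> l"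
      using star_add_ideal_left[OF L_ideal, of "minv a" x "minv a \<star> a"] a aA x
      by (auto simp: center_mod_def)
    ultimately show ?thesis
      using neg_eq_minv_add[OF aA] ideal_add[OF L_ideal] by simp
  qed
  ultimately show ?thesis
    using aA by (simp add: center_mod_def)
qed

lemma center_mod_ideal: "brace_ideal (center_mod L) B"
proof -
  have zero: "zero \<in> center_mod L"
    using ideal_subset_center_mod ideal_zero[OF L_ideal] by blast
  have star_closed: "\<forall>a\<in>A. \<forall>z\<in>center_mod L. a \<star> z \<in> center_mod L \<and> z \<star> a \<in> center_mod L"
    using ideal_subset_center_mod by (auto simp: center_mod_def)
  have "subgroup (center_mod L) (add_group B)"
    using center_mod_subset zero center_mod_add center_mod_neg
    by (intro additive.subgroupI) (auto simp flip: neg_eq_inv)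
  moreover have "subgroup (center_mod L) (mul_group B)"
  proof (rule multiplicative.subgroupI)
    fix a b assume a: "a \<in> center_mod L" and b: "b \<in> center_mod L"
    then have aA: "a \<in> A" and bA: "b \<in> A"
      using center_mod_subset by auto
    show "a \<otimes>\<^bsub>mul_group B\<^esub> b \<in> center_mod L"
      using mul_eq_add_star[OF aA bA] center_mod_add a b star_closed aA by simp
    have "neg (minv a \<star> a) \<in> center_mod L"
      using a aA star_closed center_mod_neg by auto
    then have "neg a \<boxplus> neg (minv a \<star> a) \<in> center_mod L"
      by (rule center_mod_add[OF center_mod_neg[OF a]])
    then show "inv\<^bsub>mul_group B\<^esub> a \<in> center_mod L"
      using minv_eq[OF aA] by simp
  qed (use center_mod_subset zero in auto)
  ultimately show ?thesis
    using star_closed by (simp add: brace_ideal_def subbrace_def)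
qed

lemma star_add_center_mod_left:
  assumes u: "u \<in> A" and x: "x \<in> A" and c: "c \<in> center_mod L"
  shows "\<exists>l\<in>L. (u \<boxplus> c) \<star> x = u \<star> x \<boxplus> l"
proof -
  have cA: "c \<in> A"
    using c by (simp add: center_mod_def)
  have "minv u \<star> c \<in> center_mod L"
    using ideal_subset_center_mod c u by (auto simp: center_mod_def)
  then have "c \<boxplus> minv u \<star> c \<in> center_mod L"
    using center_mod_add c by simp
  then show ?thesis
    using add_eq_mul[OF u cA] star_mul_ideal_left[OF L_ideal u x, of "c \<boxplus> minv u \<star> c"] u cA x
    by (auto simp: center_mod_def)
qed

end

section \<open>Quotient braces and the upper \<open>\<star>\<close>-central series\<close>

context
  fixes L assumes L_ideal: "brace_ideal L B"
begin

lemma bcoset_add_ideal: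
  assumes a: "a \<in> A" and d: "d \<in> L"
  shows "bcoset B (a \<boxplus> d) L = bcoset B a L"
proof -
  have dA: "d \<in> A"
    using ideal_carrier[OF L_ideal] d by auto
  have "(a \<boxplus> d) \<boxplus> l \<in> bcoset B a L" if "l \<in> L" for l
    using that a d dA ideal_add[OF L_ideal] ideal_carrier[OF L_ideal, of l]
    by (auto simp: bcoset_def add_assoc)
  moreover have "a \<boxplus> l \<in> bcoset B (a \<boxplus> d) L" if "l \<in> L" for l
  proof -
    have "a \<boxplus> l = (a \<boxplus> d) \<boxplus> (neg d \<boxplus> l)"
      using that a dA ideal_carrier[OF L_ideal, of l] by (simp add: add_assoc)
    then show ?thesis
      using that d ideal_add[OF L_ideal] ideal_neg[OF L_ideal] by (auto simp: bcoset_def)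
  qed
  ultimately show ?thesis
    unfolding bcoset_def by blast
qed

lemma bcoset_zero: "bcoset B zero L = L"
  using ideal_carrier[OF L_ideal] by (force simp: bcoset_def)

lemma bcoset_eq_ideal_iff:
  assumes "c \<in> A"
  shows "bcoset B c L = L \<longleftrightarrow> c \<in> L"
proof
  assume "bcoset B c L = L"
  moreover have "c \<in> bcoset B c L"
    using assms ideal_zero[OF L_ideal] unfolding bcoset_def by (auto intro!: exI[of _ zero])
  ultimately show "c \<in> L" by simp
next
  assume "c \<in> L"
  then show "bcoset B c L = L"
    using bcoset_add_ideal[of zero c] bcoset_zero assms by simp
qed

lemma quot_add_bcoset:
  assumes x: "x \<in> A" and y: "y \<in> A"
  shows "quot_add B (bcoset B x L) (bcoset B y L) = bcoset B (x \<boxplus> y) L"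
proof -
  have "(x \<boxplus> l) \<boxplus> (y \<boxplus> l') \<in> bcoset B (x \<boxplus> y) L" if "l \<in> L" "l' \<in> L" for l l'
  proof -
    have "(x \<boxplus> l) \<boxplus> (y \<boxplus> l') = (x \<boxplus> y) \<boxplus> (l \<boxplus> l')"
      using x y that ideal_carrier[OF L_ideal] by (simp add: add_ac)
    then show ?thesis
      using that ideal_add[OF L_ideal] by (auto simp: bcoset_def)
  qed
  moreover have "(x \<boxplus> y) \<boxplus> l \<in> quot_add B (bcoset B x L) (bcoset B y L)" if "l \<in> L" for l
  proof -
    have "(x \<boxplus> y) \<boxplus> l = (x \<boxplus> l) \<boxplus> (y \<boxplus> zero)"
      using x y that ideal_carrier[OF L_ideal] by (simp add: add_ac)
    then show ?thesis
      using that ideal_zero[OF L_ideal] unfolding quot_add_def bcoset_def by blast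
  qed
  ultimately show ?thesis
    unfolding quot_add_def bcoset_def by blast
qed

lemma quot_mul_bcoset:
  assumes x: "x \<in> A" and y: "y \<in> A"
  shows "quot_mul B (bcoset B x L) (bcoset B y L) = bcoset B (x \<boxtimes> y) L"
proof -
  have "(x \<boxplus> l) \<boxtimes> (y \<boxplus> l') \<in> bcoset B (x \<boxtimes> y) L" if l: "l \<in> L" and l': "l' \<in> L" for l l'
  proof -
    obtain l1 where l1: "l1 \<in> L" "x \<boxplus> l = x \<boxtimes> l1"
      using add_ideal_eq_mul[OF L_ideal x l] by blast
    obtain l2 where l2: "l2 \<in> L" "y \<boxplus> l' = y \<boxtimes> l2"
      using add_ideal_eq_mul[OF L_ideal y l'] by blast
    have "(x \<boxplus> l) \<boxtimes> (y \<boxplus> l') = (x \<boxtimes> y) \<boxtimes> ((minv y \<boxtimes> l1 \<boxtimes> y) \<boxtimes> l2)"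
      using l1 l2 ideal_carrier[OF L_ideal] x y by (simp add: mul_assoc)
    moreover have "(minv y \<boxtimes> l1 \<boxtimes> y) \<boxtimes> l2 \<in> L"
      using ideal_conj[OF L_ideal y l1(1)] l2 ideal_mul[OF L_ideal] by simp
    ultimately show ?thesis
      using mul_ideal_eq_add[OF L_ideal, of "x \<boxtimes> y"] x y by (auto simp: bcoset_def)
  qed
  moreover have "(x \<boxtimes> y) \<boxplus> l \<in> quot_mul B (bcoset B x L) (bcoset B y L)" if l: "l \<in> L" for l
  proof -
    obtain l1 where l1: "l1 \<in> L" "(x \<boxtimes> y) \<boxplus> l = (x \<boxtimes> y) \<boxtimes> l1"
      using add_ideal_eq_mul[OF L_ideal _ l, of "x \<boxtimes> y"] x y by auto
    obtain l2 where l2: "l2 \<in> L" "y \<boxtimes> l1 = y \<boxplus> l2"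
      using mul_ideal_eq_add[OF L_ideal y l1(1)] by blast
    have "(x \<boxtimes> y) \<boxplus> l = (x \<boxplus> zero) \<boxtimes> (y \<boxplus> l2)"
      using l1 l2 x y ideal_carrier[OF L_ideal] by (simp add: mul_assoc)
    then show ?thesis
      using l2 ideal_zero[OF L_ideal] unfolding quot_mul_def bcoset_def by blast
  qed
  ultimately show ?thesis
    unfolding quot_mul_def bcoset_def by blast
qed

lemma quot_brace_simps [simp]:
  "bcar (quot_brace B L) = {bcoset B a L | a. a \<in> A}"
  "badd (quot_brace B L) = quot_add B" "bmul (quot_brace B L) = quot_mul B"
  "bzero (quot_brace B L) = L"
  by (simp_all add: quot_brace_def)

lemma quot_neg_bcoset:
  assumes y: "y \<in> A"
  shows "bneg (quot_brace B L) (bcoset B y L) = bcoset B (neg y) L"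
proof -
  have add_group_quot:
    "add_group (quot_brace B L) = \<lparr>carrier = {bcoset B a L | a. a \<in> A}, monoid.mult = quot_add B, one = L\<rparr>"
    by (simp add: add_group_def quot_brace_def)
  have "W = bcoset B (neg y) L"
    if W_carrier: "W \<in> {bcoset B a L | a. a \<in> A}" and W: "quot_add B (bcoset B y L) W = L" for W
  proof -
    obtain w where w: "W = bcoset B w L" "w \<in> A"
      using W_carrier by blast
    then have "y \<boxplus> w \<in> L"
      using quot_add_bcoset y bcoset_eq_ideal_iff W by auto
    then have "bcoset B (neg y \<boxplus> (y \<boxplus> w)) L = bcoset B (neg y) L"
      using bcoset_add_ideal y by simp
    then show "W = bcoset B (neg y) L"
      using w y by simp
  qed
  then show ?thesis
    unfolding bneg_def[of "quot_brace B L"] add_group_quot m_inv_def using y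
    by (intro the_equality) (auto simp: quot_add_bcoset bcoset_zero)
qed

lemma quot_star_bcoset:
  assumes "a \<in> A" "x \<in> A"
  shows "star (quot_brace B L) (bcoset B a L) (bcoset B x L) = bcoset B (a \<star> x) L"
  using assms by (simp add: star_def bsub_def quot_neg_bcoset quot_add_bcoset quot_mul_bcoset star_unfold)

lemma bcoset_in_quot_star_center_iff:
  assumes "a \<in> A"
  shows "bcoset B a L \<in> star_center (quot_brace B L) \<longleftrightarrow> a \<in> center_mod L"
proof -
  have all_cosets: "(\<forall>Y\<in>bcar (quot_brace B L). P Y) \<longleftrightarrow> (\<forall>x\<in>A. P (bcoset B x L))" for P
    by auto
  have "bcoset B a L \<in> star_center (quot_brace B L) \<longleftrightarrow>
      (\<forall>x\<in>A. bcoset B (a \<star> x) L = L \<and> bcoset B (x \<star> a) L = L)"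
    unfolding star_center_def mem_Collect_eq all_cosets using assms
    by (auto simp: quot_star_bcoset)
  also have "\<dots> \<longleftrightarrow> a \<in> center_mod L"
    using assms by (simp add: bcoset_eq_ideal_iff center_mod_def)
  finally show ?thesis .
qed

end

abbreviation zeta :: "nat \<Rightarrow> 'a set" where
  "zeta n \<equiv> upper_star_center B n"

lemma zero_ideal: "brace_ideal {zero} B"
proof -
  have "subgroup {zero} (add_group B)"
    by (rule additive.subgroupI) (auto simp flip: neg_eq_inv)
  moreover have "subgroup {zero} (mul_group B)"
    using multiplicative.inv_one by (intro multiplicative.subgroupI) auto
  ultimately show ?thesis
    by (simp add: brace_ideal_def subbrace_def)
qed

lemma zeta_Suc_if_ideal: "brace_ideal (zeta n) B \<Longrightarrow> zeta (Suc n) = center_mod (zeta n)"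
  using bcoset_in_quot_star_center_iff center_mod_subset by auto

lemma zeta_ideal: "brace_ideal (zeta n) B"
proof (induction n)
  case (Suc n)
  then show ?case
    using zeta_Suc_if_ideal center_mod_ideal by simp
qed (simp add: zero_ideal)

lemma zeta_Suc: "zeta (Suc n) = center_mod (zeta n)"
  using zeta_Suc_if_ideal zeta_ideal by blast

declare upper_star_center.simps(2) [simp del]

lemma zeta_one_eq_star_center: "zeta (Suc 0) = star_center B"
  using zeta_Suc[of 0] by (auto simp: center_mod_def star_center_def)

lemma zeta_subset: "zeta n \<subseteq> A"
  using ideal_subset zeta_ideal by blast

lemma star_self_zeta_Suc: "a \<in> zeta (Suc n) \<Longrightarrow> a \<star> a \<in> zeta n"
  using zeta_subset by (auto simp: zeta_Suc center_mod_def)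

section \<open>Subbraces of \<open>\<zeta>\<^sub>n\<close> in a T-brace\<close>

definition plus_set :: "'a set \<Rightarrow> 'a set \<Rightarrow> 'a set" where
  "plus_set H L = {h \<boxplus> l | h l. h \<in> H \<and> l \<in> L}"

lemma plus_set_add_subgroup:
  assumes H: "subgroup H (add_group B)" and L: "subgroup L (add_group B)"
  shows "subgroup (plus_set H L) (add_group B)"
proof (rule additive.subgroupI)
  interpret H: subgroup H "add_group B" by (rule H)
  interpret L: subgroup L "add_group B" by (rule L)
  show "plus_set H L \<subseteq> carrier (add_group B)"
    using H.subset L.subset by (auto simp: plus_set_def)
  show "plus_set H L \<noteq> {}"
    using H.one_closed L.one_closed by (auto simp: plus_set_def)
  fix a b assume "a \<in> plus_set H L" "b \<in> plus_set H L"
  then obtain h l h' l' where hl: "a = h \<boxplus> l" "b = h' \<boxplus> l'" "h \<in> H" "l \<in> L" "h' \<in> H" "l' \<in> L"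
    unfolding plus_set_def by blast
  then have carrier: "h \<in> A" "l \<in> A" "h' \<in> A" "l' \<in> A"
    using H.subset L.subset by auto
  have "neg a = neg h \<boxplus> neg l"
    using hl carrier by simp
  then show "inv\<^bsub>add_group B\<^esub> a \<in> plus_set H L"
    using hl H.m_inv_closed L.m_inv_closed unfolding plus_set_def by (auto simp flip: neg_eq_inv)
  have "a \<boxplus> b = (h \<boxplus> h') \<boxplus> (l \<boxplus> l')"
    using hl carrier by (simp add: add_ac)
  moreover have "h \<boxplus> h' \<in> H" "l \<boxplus> l' \<in> L"
    using hl H.m_closed L.m_closed by simp_all
  ultimately show "a \<otimes>\<^bsub>add_group B\<^esub> b \<in> plus_set H L"
    unfolding plus_set_def by auto
qed

lemma plus_set_mul_subgroup:
  assumes H: "subbrace H B" and L_ideal: "brace_ideal L B"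
  shows "subgroup (plus_set H L) (mul_group B)"
proof (rule multiplicative.subgroupI)
  show "plus_set H L \<subseteq> carrier (mul_group B)"
    using subbrace_carrier[OF H] ideal_carrier[OF L_ideal] by (auto simp: plus_set_def)
  show "plus_set H L \<noteq> {}"
    using subbrace_zero[OF H] ideal_zero[OF L_ideal] by (auto simp: plus_set_def)
  fix a b assume "a \<in> plus_set H L" "b \<in> plus_set H L"
  then obtain h l h' l' where hl: "a = h \<boxplus> l" "b = h' \<boxplus> l'" "h \<in> H" "l \<in> L" "h' \<in> H" "l' \<in> L"
    unfolding plus_set_def by blast
  then have hA: "h \<in> A" "h' \<in> A"
    using subbrace_carrier[OF H] by auto
  obtain c where c: "c \<in> L" "a = h \<boxtimes> c"
    using add_ideal_eq_mul[OF L_ideal hA(1) hl(4)] hl by auto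
  obtain c' where c': "c' \<in> L" "b = h' \<boxtimes> c'"
    using add_ideal_eq_mul[OF L_ideal hA(2) hl(6)] hl by auto
  have cA: "c \<in> A" "c' \<in> A"
    using c c' ideal_carrier[OF L_ideal] by auto
  have "a \<boxtimes> b = (h \<boxtimes> h') \<boxtimes> ((minv h' \<boxtimes> c \<boxtimes> h') \<boxtimes> c')"
    using c c' cA hA by (simp add: mul_assoc)
  moreover have "(minv h' \<boxtimes> c \<boxtimes> h') \<boxtimes> c' \<in> L"
    using ideal_conj[OF L_ideal hA(2) c(1)] c' ideal_mul[OF L_ideal] by simp
  ultimately obtain l'' where "l'' \<in> L" "a \<boxtimes> b = h \<boxtimes> h' \<boxplus> l''"
    using mul_ideal_eq_add[OF L_ideal, of "h \<boxtimes> h'"] hA by auto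
  then show "a \<otimes>\<^bsub>mul_group B\<^esub> b \<in> plus_set H L"
    using subbrace_mul[OF H hl(3,5)] unfolding plus_set_def by auto
  have "minv a = minv h \<boxtimes> (h \<boxtimes> minv c \<boxtimes> minv h)"
    using c cA hA multiplicative.inv_mult_group[of h c] by (simp add: mul_assoc)
  moreover have "h \<boxtimes> minv c \<boxtimes> minv h \<in> L"
    using ideal_conj'[OF L_ideal hA(1) ideal_minv[OF L_ideal c(1)]] .
  ultimately obtain l'' where "l'' \<in> L" "minv a = minv h \<boxplus> l''"
    using mul_ideal_eq_add[OF L_ideal, of "minv h"] hA by auto
  then show "inv\<^bsub>mul_group B\<^esub> a \<in> plus_set H L"
    using subbrace_minv[OF H hl(3)] unfolding plus_set_def by auto
qed

lemma plus_set_subbrace: "subbrace H B \<Longrightarrow> brace_ideal L B \<Longrightarrow> subbrace (plus_set H L) B"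
  using plus_set_add_subgroup plus_set_mul_subgroup subbrace_add_subgroup ideal_subbrace
  by (simp add: subbrace_def)

lemma plus_set_zero:
  assumes "H \<subseteq> A"
  shows "plus_set H {zero} = H"
proof -
  have "h = h \<boxplus> zero" if "h \<in> H" for h
    using assms that by auto
  then show ?thesis
    using assms unfolding plus_set_def by auto
qed

lemma plus_set_absorb:
  assumes L_ideal: "brace_ideal L B" and "zero \<in> H" "H \<subseteq> L"
  shows "plus_set H L = L"
proof -
  have "l = zero \<boxplus> l" if "l \<in> L" for l
    using ideal_carrier[OF L_ideal that] by simp
  then show ?thesis
    using assms ideal_add[OF L_ideal] unfolding plus_set_def by blast
qed

lemma restrict_brace_simps [simp]:
  "badd (restrict_brace B J) = badd B" "bmul (restrict_brace B J) = bmul B" "bcar (restrict_brace B J) = J"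
  by (simp_all add: restrict_brace_def)

lemma restrict_brace_groups:
  "add_group (restrict_brace B J) = (add_group B)\<lparr>carrier := J\<rparr>"
  "mul_group (restrict_brace B J) = (mul_group B)\<lparr>carrier := J\<rparr>"
  by (simp_all add: restrict_brace_def add_group_def mul_group_def)

lemma star_restrict_brace:
  assumes "subgroup J (add_group B)" "x \<in> J" "y \<in> J"
  shows "star (restrict_brace B J) x y = x \<star> y"
proof -
  have "bneg (restrict_brace B J) v = neg v" if "v \<in> J" for v
    unfolding bneg_def restrict_brace_groups using additive.m_inv_consistent[OF assms(1) that] .
  then show ?thesis
    using assms by (simp add: star_def bsub_def bneg_def)
qed

lemma brace_ideal_restrict_braceI:
  assumes "subbrace J B" "subbrace I B" "I \<subseteq> J"
    and "\<forall>u\<in>J. \<forall>v\<in>I. u \<star> v \<in> I \<and> v \<star> u \<in> I"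
  shows "brace_ideal I (restrict_brace B J)"
proof -
  have "subbrace I (restrict_brace B J)"
    unfolding subbrace_def restrict_brace_groups
    using assms additive.subgroup_incl multiplicative.subgroup_incl by (auto simp: subbrace_def)
  moreover have "\<forall>u\<in>J. \<forall>v\<in>I. star (restrict_brace B J) u v \<in> I \<and> star (restrict_brace B J) v u \<in> I"
    using assms star_restrict_brace[of J] by (auto simp: subbrace_def)
  ultimately show ?thesis
    by (simp add: brace_ideal_def)
qed

lemma plus_set_ideal_in_plus_center_mod:
  assumes H: "subbrace H B" and L_ideal: "brace_ideal L B"
  shows "brace_ideal (plus_set H L) (restrict_brace B (plus_set H (center_mod L)))"
proof (rule brace_ideal_restrict_braceI)
  show "subbrace (plus_set H (center_mod L)) B"
    using plus_set_subbrace[OF H center_mod_ideal[OF L_ideal]] .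
  show "subbrace (plus_set H L) B"
    using plus_set_subbrace[OF H L_ideal] .
  show "plus_set H L \<subseteq> plus_set H (center_mod L)"
    using ideal_subset_center_mod[OF L_ideal] unfolding plus_set_def by blast
  show "\<forall>u\<in>plus_set H (center_mod L). \<forall>v\<in>plus_set H L. u \<star> v \<in> plus_set H L \<and> v \<star> u \<in> plus_set H L"
  proof (intro ballI conjI)
    fix u v assume "u \<in> plus_set H (center_mod L)" "v \<in> plus_set H L"
    then obtain h c h' l where hc: "u = h \<boxplus> c" "h \<in> H" "c \<in> center_mod L"
        and hl: "v = h' \<boxplus> l" "h' \<in> H" "l \<in> L"
      unfolding plus_set_def by blast
    have carrier: "h \<in> A" "c \<in> A" "h' \<in> A" "l \<in> A"
      using hc hl subbrace_carrier[OF H] ideal_carrier[OF L_ideal] center_mod_subset by auto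
    then have uv: "u \<in> A" "v \<in> A"
      using hc hl by auto
    obtain l1 where l1: "l1 \<in> L" "u \<star> h' = h \<star> h' \<boxplus> l1"
      using star_add_center_mod_left[OF L_ideal carrier(1,3) hc(3)] hc by auto
    have "u \<star> v = h \<star> h' \<boxplus> (l1 \<boxplus> u \<star> l)"
      using hl l1 star_add_right carrier uv ideal_carrier[OF L_ideal] by (simp add: add_assoc)
    then show "u \<star> v \<in> plus_set H L"
      using subbrace_star[OF H hc(2) hl(2)] l1 ideal_add[OF L_ideal] ideal_star_left[OF L_ideal uv(1) hl(3)]
      unfolding plus_set_def by auto
    obtain l2 where l2: "l2 \<in> L" "v \<star> h = h' \<star> h \<boxplus> l2"
      using star_add_center_mod_left[OF L_ideal carrier(3,1)] ideal_subset_center_mod[OF L_ideal] hl by auto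
    have "v \<star> c \<in> L"
      using hc(3) uv by (simp add: center_mod_def)
    moreover have "v \<star> u = h' \<star> h \<boxplus> (l2 \<boxplus> v \<star> c)"
      using hc l2 star_add_right carrier uv ideal_carrier[OF L_ideal] by (simp add: add_assoc)
    ultimately show "v \<star> u \<in> plus_set H L"
      using subbrace_star[OF H hl(2) hc(2)] l2 ideal_add[OF L_ideal] unfolding plus_set_def by auto
  qed
qed

lemma subbrace_in_zeta_ideal:
  assumes T: "T_brace B" and H: "subbrace H B" and H_zeta: "H \<subseteq> zeta n"
  shows "brace_ideal H B"
proof -
  have "brace_ideal (plus_set H (zeta j)) B" if "j \<le> n" for j
    using that
  proof (induction rule: inc_induct)
    case base
    then show ?case
      using plus_set_absorb[OF zeta_ideal subbrace_zero[OF H] H_zeta] zeta_ideal by simp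
  next
    case (step j)
    have "brace_ideal (plus_set H (zeta j)) (restrict_brace B (plus_set H (zeta (Suc j))))"
      using plus_set_ideal_in_plus_center_mod[OF H zeta_ideal] zeta_Suc by simp
    then show ?case
      using T step.IH unfolding T_brace_def by blast
  qed
  from this[of 0] show ?thesis
    using plus_set_zero[OF subbrace_subset[OF H]] by simp
qed

section \<open>The subbrace generated by an element\<close>

abbreviation zsmult :: "int \<Rightarrow> 'a \<Rightarrow> 'a" where
  "zsmult k x \<equiv> x [^]\<^bsub>add_group B\<^esub> k"

abbreviation zpow :: "int \<Rightarrow> 'a \<Rightarrow> 'a" where
  "zpow k x \<equiv> x [^]\<^bsub>mul_group B\<^esub> k"

lemma zsmult_closed [simp]: "x \<in> A \<Longrightarrow> zsmult k x \<in> A"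
  using additive.int_pow_closed[of x k] by simp

lemma zpow_closed [simp]: "x \<in> A \<Longrightarrow> zpow k x \<in> A"
  using multiplicative.int_pow_closed[of x k] by simp

lemma zsmult_add: "x \<in> A \<Longrightarrow> zsmult (i + j) x = zsmult i x \<boxplus> zsmult j x"
  using additive.int_pow_mult[of x i j] by simp

lemma zpow_add: "x \<in> A \<Longrightarrow> zpow (i + j) x = zpow i x \<boxtimes> zpow j x"
  using multiplicative.int_pow_mult[of x i j] by simp

lemma zsmult_one [simp]: "x \<in> A \<Longrightarrow> zsmult 1 x = x"
  using additive.int_pow_1[of x] by simp

lemma zpow_one [simp]: "x \<in> A \<Longrightarrow> zpow 1 x = x"
  using multiplicative.int_pow_1[of x] by simp

lemma zsmult_uminus: "x \<in> A \<Longrightarrow> zsmult (- i) x = neg (zsmult i x)"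
  using additive.int_pow_neg[of x i] by (simp add: neg_eq_inv)

lemma zpow_uminus: "x \<in> A \<Longrightarrow> zpow (- i) x = minv (zpow i x)"
  using multiplicative.int_pow_neg[of x i] by simp

lemma cyc_eq_zsmult: "x \<in> A \<Longrightarrow> cyc B x = {zsmult k x | k. True}"
  unfolding cyc_def using additive.generate_pow[of x] by simp

lemma cyc_subset: "x \<in> A \<Longrightarrow> cyc B x \<subseteq> A"
  using cyc_eq_zsmult by auto

lemma cyc_add_subgroup: "x \<in> A \<Longrightarrow> subgroup (cyc B x) (add_group B)"
  unfolding cyc_def using additive.generate_is_subgroup[of "{x}"] by simp

context
  fixes L a assumes L_ideal: "brace_ideal L B" and aA: "a \<in> A" and a_star_a: "a \<star> a \<in> L"
begin

lemma minv_star_in_ideal: "minv a \<star> a \<in> L"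
proof -
  have "minv a \<star> (a \<star> a) \<boxplus> minv a \<star> a \<boxplus> a \<star> a = zero"
    using star_mul_left[of "minv a" a a] aA by simp
  then show ?thesis
    using ideal_middle_summand[OF L_ideal] a_star_a ideal_star_left[OF L_ideal] aA by simp
qed

lemma zpow_star_in_ideal: "zpow k a \<star> a \<in> L"
proof (induction k rule: int_induct[where k = 0])
  case base
  then show ?case
    using aA ideal_zero[OF L_ideal] by simp
next
  case (step1 i)
  have "zpow (i + 1) a = a \<boxtimes> zpow i a"
    using zpow_add[OF aA, of 1 i] aA by (simp add: add.commute)
  then have "zpow (i + 1) a \<star> a = a \<star> (zpow i a \<star> a) \<boxplus> a \<star> a \<boxplus> zpow i a \<star> a"
    using star_mul_left[of a "zpow i a" a] aA by simp
  then show ?case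
    using step1 a_star_a ideal_star_left[OF L_ideal] ideal_add[OF L_ideal] aA by simp
next
  case (step2 i)
  have "zpow (i - 1) a = minv a \<boxtimes> zpow i a"
    using zpow_add[OF aA, of "-1" i] zpow_uminus[OF aA, of 1] aA by simp
  then have "zpow (i - 1) a \<star> a = minv a \<star> (zpow i a \<star> a) \<boxplus> minv a \<star> a \<boxplus> zpow i a \<star> a"
    using star_mul_left[of "minv a" "zpow i a" a] aA by simp
  then show ?case
    using step2 minv_star_in_ideal ideal_star_left[OF L_ideal] ideal_add[OF L_ideal] aA by simp
qed

lemma zpow_eq_zsmult_mod_ideal: "\<exists>l\<in>L. zpow k a = zsmult k a \<boxplus> l"
proof (induction k rule: int_induct[where k = 0])
  case base
  then show ?case
    using aA ideal_zero[OF L_ideal] by (intro bexI[of _ zero]) simp_all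
next
  case (step1 i)
  then obtain l where l: "l \<in> L" "zpow i a = zsmult i a \<boxplus> l"
    by blast
  have "zpow (i + 1) a = zpow i a \<boxplus> a \<boxplus> zpow i a \<star> a"
    using zpow_add[OF aA, of i 1] mul_eq_add_star aA by simp
  also have "\<dots> = zsmult (i + 1) a \<boxplus> (l \<boxplus> zpow i a \<star> a)"
    using l ideal_carrier[OF L_ideal] aA zsmult_add[OF aA, of i 1] by (simp add: add_ac)
  finally show ?case
    using l zpow_star_in_ideal ideal_add[OF L_ideal] by blast
next
  case (step2 i)
  then obtain l where l: "l \<in> L" "zpow i a = zsmult i a \<boxplus> l"
    by blast
  define c where "c = neg (minv a \<star> a)"
  define m where "m = zpow i a \<star> minv a"
  have c: "c \<in> L" "minv a = neg a \<boxplus> c"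
    unfolding c_def by (rule ideal_neg[OF L_ideal minv_star_in_ideal], rule minv_eq[OF aA])
  have "m = neg (zpow i a \<star> a) \<boxplus> zpow i a \<star> c"
    unfolding m_def c(2) using c(1) ideal_carrier[OF L_ideal] aA by (simp add: star_add_right star_neg_right)
  then have m: "m \<in> L"
    using c(1) zpow_star_in_ideal ideal_neg[OF L_ideal] ideal_add[OF L_ideal] ideal_star_left[OF L_ideal] aA
    by simp
  have "zpow (i - 1) a = zpow i a \<boxplus> minv a \<boxplus> m"
    using zpow_add[OF aA, of i "-1"] zpow_uminus[OF aA, of 1] mul_eq_add_star aA by (simp add: m_def)
  also have "\<dots> = zsmult (i - 1) a \<boxplus> (l \<boxplus> c \<boxplus> m)"
    using l c m ideal_carrier[OF L_ideal] aA zsmult_add[OF aA, of i "-1"] zsmult_uminus[OF aA, of 1]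
    by (simp add: add_ac)
  finally show ?case
    using l c m ideal_add[OF L_ideal] by blast
qed

lemma cyc_plus_ideal_iff: "q \<in> plus_set (cyc B a) L \<longleftrightarrow> (\<exists>k. \<exists>l\<in>L. q = zpow k a \<boxtimes> l)"
proof
  assume "q \<in> plus_set (cyc B a) L"
  then obtain k l where q: "q = zsmult k a \<boxplus> l" "l \<in> L"
    unfolding plus_set_def cyc_eq_zsmult[OF aA] by blast
  obtain l0 where l0: "l0 \<in> L" "zpow k a = zsmult k a \<boxplus> l0"
    using zpow_eq_zsmult_mod_ideal by blast
  have "q = zpow k a \<boxplus> (neg l0 \<boxplus> l)"
    using q l0 ideal_carrier[OF L_ideal] aA by (simp add: add_assoc)
  moreover obtain l' where "l' \<in> L" "zpow k a \<boxplus> (neg l0 \<boxplus> l) = zpow k a \<boxtimes> l'"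
    using add_ideal_eq_mul[OF L_ideal zpow_closed[OF aA] ideal_add[OF L_ideal ideal_neg[OF L_ideal l0(1)] q(2)]]
    by blast
  ultimately show "\<exists>k. \<exists>l\<in>L. q = zpow k a \<boxtimes> l"
    by auto
next
  assume "\<exists>k. \<exists>l\<in>L. q = zpow k a \<boxtimes> l"
  then obtain k l where q: "q = zpow k a \<boxtimes> l" "l \<in> L"
    by blast
  obtain l0 where l0: "l0 \<in> L" "zpow k a = zsmult k a \<boxplus> l0"
    using zpow_eq_zsmult_mod_ideal by blast
  obtain l' where l': "l' \<in> L" "q = zpow k a \<boxplus> l'"
    using mul_ideal_eq_add[OF L_ideal, of "zpow k a" l] q aA by auto
  have "q = zsmult k a \<boxplus> (l0 \<boxplus> l')"
    using l' l0 ideal_carrier[OF L_ideal] aA by (simp add: add_ac)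
  then show "q \<in> plus_set (cyc B a) L"
    using ideal_add[OF L_ideal] l0 l' unfolding plus_set_def cyc_eq_zsmult[OF aA] by blast
qed

lemma cyc_plus_ideal_mul_subgroup: "subgroup (plus_set (cyc B a) L) (mul_group B)"
proof (rule multiplicative.subgroupI)
  show "plus_set (cyc B a) L \<subseteq> carrier (mul_group B)"
    using cyc_subset[OF aA] ideal_carrier[OF L_ideal] by (auto simp: plus_set_def)
  have "zero = zpow 0 a \<boxtimes> zero"
    by simp
  then show "plus_set (cyc B a) L \<noteq> {}"
    using cyc_plus_ideal_iff ideal_zero[OF L_ideal] by blast
  fix p q assume "p \<in> plus_set (cyc B a) L" "q \<in> plus_set (cyc B a) L"
  then obtain k l k' l' where pq: "p = zpow k a \<boxtimes> l" "l \<in> L" "q = zpow k' a \<boxtimes> l'" "l' \<in> L"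
    using cyc_plus_ideal_iff by blast
  have lA: "l \<in> A" "l' \<in> A"
    using pq ideal_carrier[OF L_ideal] by auto
  have "p \<boxtimes> q = zpow (k + k') a \<boxtimes> ((minv (zpow k' a) \<boxtimes> l \<boxtimes> zpow k' a) \<boxtimes> l')"
    using pq lA aA zpow_add by (simp add: mul_assoc)
  moreover have "(minv (zpow k' a) \<boxtimes> l \<boxtimes> zpow k' a) \<boxtimes> l' \<in> L"
    using ideal_conj[OF L_ideal, of "zpow k' a" l] pq aA ideal_mul[OF L_ideal] by simp
  ultimately show "p \<otimes>\<^bsub>mul_group B\<^esub> q \<in> plus_set (cyc B a) L"
    using cyc_plus_ideal_iff by auto
  have "minv p = zpow (- k) a \<boxtimes> (zpow k a \<boxtimes> minv l \<boxtimes> minv (zpow k a))"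
    using pq lA aA zpow_uminus multiplicative.inv_mult_group[of "zpow k a" l] by (simp add: mul_assoc)
  moreover have "zpow k a \<boxtimes> minv l \<boxtimes> minv (zpow k a) \<in> L"
    using ideal_conj'[OF L_ideal, of "zpow k a" "minv l"] aA ideal_minv[OF L_ideal] pq by simp
  ultimately show "inv\<^bsub>mul_group B\<^esub> p \<in> plus_set (cyc B a) L"
    using cyc_plus_ideal_iff by auto
qed

lemma cyc_plus_ideal_subbrace: "subbrace (plus_set (cyc B a) L) B"
  using plus_set_add_subgroup[OF cyc_add_subgroup[OF aA]] cyc_plus_ideal_mul_subgroup
    subbrace_add_subgroup[OF ideal_subbrace[OF L_ideal]]
  by (simp add: subbrace_def)

lemma mem_cyc_plus_ideal: "a \<in> plus_set (cyc B a) L"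
proof -
  have "a = zsmult 1 a \<boxplus> zero"
    using aA by simp
  then show ?thesis
    using ideal_zero[OF L_ideal] unfolding plus_set_def cyc_eq_zsmult[OF aA] by blast
qed

end

lemma br_subbrace:
  assumes "a \<in> A"
  shows "subbrace (br B a) B"
proof -
  let ?F = "{S. subbrace S B \<and> a \<in> S}"
  have "A \<in> ?F"
    using assms additive.subgroup_self multiplicative.subgroup_self by (simp add: subbrace_def)
  then have "subgroup (\<Inter>?F) (add_group B)" "subgroup (\<Inter>?F) (mul_group B)"
    by (auto intro!: additive.subgroups_Inter multiplicative.subgroups_Inter simp: subbrace_def)
  then show ?thesis
    by (simp add: subbrace_def br_def)
qed

lemma br_least: "subbrace S B \<Longrightarrow> a \<in> S \<Longrightarrow> br B a \<subseteq> S"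
  by (auto simp: br_def)

lemma br_self: "a \<in> A \<Longrightarrow> a \<in> br B a"
  by (auto simp: br_def)

lemma br_eq_cyc_plus_br_star:
  assumes aA: "a \<in> A" and ideal: "brace_ideal (br B (a \<star> a)) B"
  shows "br B a = plus_set (cyc B a) (br B (a \<star> a))"
proof
  have "a \<star> a \<in> br B (a \<star> a)"
    using br_self aA by simp
  then show "br B a \<subseteq> plus_set (cyc B a) (br B (a \<star> a))"
    using br_least cyc_plus_ideal_subbrace[OF ideal aA] mem_cyc_plus_ideal[OF ideal aA] by blast
  have br_a: "subbrace (br B a) B"
    using br_subbrace[OF aA] .
  then have "br B (a \<star> a) \<subseteq> br B a"
    using br_least subbrace_star br_self[OF aA] by blast
  moreover have "cyc B a \<subseteq> br B a"
    using additive.subgroup_int_pow_closed[OF subbrace_add_subgroup[OF br_a] br_self[OF aA]]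
    by (auto simp: cyc_eq_zsmult[OF aA])
  ultimately show "plus_set (cyc B a) (br B (a \<star> a)) \<subseteq> br B a"
    using subbrace_add[OF br_a] unfolding plus_set_def by blast
qed

section \<open>Decomposition of \<open>br(a)\<close> into cyclic subgroups\<close>

lemma finprod_Suc_split:
  assumes "\<And>i. i \<in> {1..Suc n} \<Longrightarrow> x i \<in> A"
  shows "finprod (add_group B) x {1..Suc n} = x 1 \<boxplus> finprod (add_group B) (\<lambda>i. x (Suc i)) {1..n}"
proof -
  have x: "x \<in> Suc ` {1..n} \<rightarrow> carrier (add_group B)"
    using assms by (auto simp: atLeastAtMost_Suc_insert)
  have "finprod (add_group B) x {1..Suc n} = x 1 \<boxplus> finprod (add_group B) x (Suc ` {1..n})"
    unfolding atLeastAtMost_Suc_insert using additive.finprod_insert[of "Suc ` {1..n}" 1 x] x assms by auto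
  also have "finprod (add_group B) x (Suc ` {1..n}) = finprod (add_group B) (\<lambda>i. x (Suc i)) {1..n}"
    using additive.finprod_reindex[OF x] by simp
  finally show ?thesis .
qed

context
  fixes H :: "nat \<Rightarrow> 'a set" and n :: nat
  assumes H_subset: "\<And>i. i \<in> {1..Suc n} \<Longrightarrow> H i \<subseteq> A"
begin

lemma subgroup_sum_Suc:
  "subgroup_sum B H {1..Suc n} = plus_set (H 1) (subgroup_sum B (\<lambda>i. H (Suc i)) {1..n})"
proof (intro equalityI subsetI)
  fix v assume "v \<in> subgroup_sum B H {1..Suc n}"
  then obtain x where v: "v = finprod (add_group B) x {1..Suc n}" and x: "\<forall>i\<in>{1..Suc n}. x i \<in> H i"
    unfolding subgroup_sum_def by blast
  then have "v = x 1 \<boxplus> finprod (add_group B) (\<lambda>i. x (Suc i)) {1..n}"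
    using finprod_Suc_split H_subset by blast
  moreover have "finprod (add_group B) (\<lambda>i. x (Suc i)) {1..n} \<in> subgroup_sum B (\<lambda>i. H (Suc i)) {1..n}"
    using x unfolding ball_atLeastAtMost_Suc subgroup_sum_def by blast
  ultimately show "v \<in> plus_set (H 1) (subgroup_sum B (\<lambda>i. H (Suc i)) {1..n})"
    using x unfolding ball_atLeastAtMost_Suc plus_set_def by blast
next
  fix v assume "v \<in> plus_set (H 1) (subgroup_sum B (\<lambda>i. H (Suc i)) {1..n})"
  then obtain u y where v: "v = u \<boxplus> finprod (add_group B) y {1..n}" and u: "u \<in> H 1"
      and y: "\<forall>i\<in>{1..n}. y i \<in> H (Suc i)"
    unfolding plus_set_def subgroup_sum_def by blast
  define x where "x i = (if i = 1 then u else y (i - 1))" for i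
  have x: "\<forall>i\<in>{1..Suc n}. x i \<in> H i"
    unfolding ball_atLeastAtMost_Suc using u y by (simp add: x_def)
  have "y i \<in> carrier (add_group B)" if "i \<in> {1..n}" for i
    using that y H_subset[of "Suc i"] by auto
  then have "finprod (add_group B) y {1..n} = finprod (add_group B) (\<lambda>i. x (Suc i)) {1..n}"
    by (intro additive.finprod_cong' [symmetric]) (auto simp: x_def)
  moreover have "x i \<in> A" if "i \<in> {1..Suc n}" for i
    using x that H_subset by blast
  ultimately have "v = finprod (add_group B) x {1..Suc n}"
    using finprod_Suc_split[where x = x] v by (simp add: x_def)
  then show "v \<in> subgroup_sum B H {1..Suc n}"
    using x unfolding subgroup_sum_def by blast
qed

lemma sum_is_direct_Suc:
  assumes subgroup: "subgroup (subgroup_sum B (\<lambda>i. H (Suc i)) {1..n}) (add_group B)"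
    and disjoint: "H 1 \<inter> subgroup_sum B (\<lambda>i. H (Suc i)) {1..n} \<subseteq> {zero}"
    and direct: "sum_is_direct B (\<lambda>i. H (Suc i)) {1..n}"
  shows "sum_is_direct B H {1..Suc n}"
  unfolding sum_is_direct_def
proof (intro allI impI, elim conjE)
  fix x assume x: "\<forall>i\<in>{1..Suc n}. x i \<in> H i" and sum: "finprod (add_group B) x {1..Suc n} = zero"
  let ?F = "finprod (add_group B) (\<lambda>i. x (Suc i)) {1..n}"
  have x1_H: "x 1 \<in> H 1" and x_tail: "\<forall>i\<in>{1..n}. x (Suc i) \<in> H (Suc i)"
    using x unfolding ball_atLeastAtMost_Suc by simp_all
  have xA: "x i \<in> A" if "i \<in> {1..Suc n}" for i
    using x that H_subset by blast
  have F_sum: "?F \<in> subgroup_sum B (\<lambda>i. H (Suc i)) {1..n}"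
    unfolding subgroup_sum_def using x_tail by blast
  then have FA: "?F \<in> A"
    using subgroup.subset[OF subgroup] by auto
  have split: "x 1 \<boxplus> ?F = zero"
    using sum finprod_Suc_split[where x = x, OF xA] by simp
  then have "x 1 = neg ?F"
    using neg_unique xA FA by simp
  then have "x 1 \<in> subgroup_sum B (\<lambda>i. H (Suc i)) {1..n}"
    using subgroup.m_inv_closed[OF subgroup F_sum] by (simp add: neg_eq_inv)
  then have x1: "x 1 = zero"
    using disjoint x1_H by blast
  then have "?F = zero"
    using split FA by simp
  then have "\<forall>i\<in>{1..n}. x (Suc i) = zero"
    using spec[OF direct[unfolded sum_is_direct_def], of "\<lambda>i. x (Suc i)"] x_tail by blast
  then show "\<forall>i\<in>{1..Suc n}. x i = zero"
    unfolding ball_atLeastAtMost_Suc using x1 by simp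
qed

end

lemma star_seq_carrier:
  assumes "a \<in> A" "s 1 = a" "\<forall>i\<ge>1. s (Suc i) = s i \<star> s i" "i \<ge> 1"
  shows "s i \<in> A"
  using assms(4) by (induction i rule: dec_induct) (use assms in simp_all)

lemma br_zero: "br B zero = {zero}"
  using br_least[OF ideal_subbrace[OF zero_ideal], of zero] br_self[of zero] by auto

lemma br_star_subset_zeta: "a \<in> zeta (Suc n) \<Longrightarrow> br B (a \<star> a) \<subseteq> zeta n"
  using br_least[OF ideal_subbrace[OF zeta_ideal] star_self_zeta_Suc] .

lemma br_ideal_if_zeta:
  assumes "T_brace B" "a \<in> zeta n"
  shows "brace_ideal (br B a) B"
proof -
  have "a \<in> A"
    using assms zeta_subset by blast
  then show ?thesis
    using subbrace_in_zeta_ideal[OF assms(1) br_subbrace] br_least[OF ideal_subbrace[OF zeta_ideal] assms(2)]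
    by blast
qed

lemma br_eq_subgroup_sum:
  assumes T: "T_brace B" and "a \<in> zeta n" "s 1 = a" "\<forall>i\<ge>1. s (Suc i) = s i \<star> s i"
  shows "br B a = subgroup_sum B (\<lambda>i. cyc B (s i)) {1..n}"
  using assms(2-)
proof (induction n arbitrary: a s)
  case 0
  then show ?case
    using br_zero by (simp add: subgroup_sum_def)
next
  case (Suc n)
  have aA: "a \<in> A"
    using Suc.prems(1) zeta_subset by blast
  have "br B (a \<star> a) = subgroup_sum B (\<lambda>i. cyc B (s (Suc i))) {1..n}"
    using Suc.IH[of "a \<star> a" "\<lambda>i. s (Suc i)"] star_self_zeta_Suc Suc.prems by simp
  moreover have "brace_ideal (br B (a \<star> a)) B"
    using br_ideal_if_zeta[OF T star_self_zeta_Suc[OF Suc.prems(1)]] .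
  moreover have "cyc B (s i) \<subseteq> A" if "i \<in> {1..Suc n}" for i
    using cyc_subset star_seq_carrier[OF aA Suc.prems(2,3)] that by simp
  ultimately show ?case
    using br_eq_cyc_plus_br_star[OF aA] subgroup_sum_Suc Suc.prems(2) by simp
qed

section \<open>Torsion-freeness and directness\<close>

abbreviation nsmult :: "nat \<Rightarrow> 'a \<Rightarrow> 'a" where
  "nsmult m x \<equiv> x [^]\<^bsub>add_group B\<^esub> m"

lemma nsmult_Suc: "x \<in> A \<Longrightarrow> nsmult (Suc m) x = nsmult m x \<boxplus> x"
  using additive.nat_pow_Suc[of x m] by simp

lemma nsmult_closed [simp]: "x \<in> A \<Longrightarrow> nsmult m x \<in> A"
  using additive.nat_pow_closed[of x m] by simp

lemma ideal_nsmult: "brace_ideal L B \<Longrightarrow> y \<in> L \<Longrightarrow> nsmult m y \<in> L"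
  by (induction m) (auto simp: nsmult_Suc ideal_add ideal_carrier)

lemma ideal_nsmult_abs:
  assumes L_ideal: "brace_ideal L B" and "x \<in> A" "zsmult k x \<in> L"
  shows "nsmult (nat \<bar>k\<bar>) x \<in> L"
proof (cases "k \<ge> 0")
  case True
  then show ?thesis
    using assms int_pow_int[of "add_group B" x "nat k"] by simp
next
  case False
  then have "nsmult (nat \<bar>k\<bar>) x = neg (zsmult k x)"
    using zsmult_uminus[OF assms(2), of k] int_pow_int[of "add_group B" x "nat (- k)"] by simp
  then show ?thesis
    using ideal_neg[OF L_ideal assms(3)] by simp
qed

lemma star_nsmult_right: "x \<in> A \<Longrightarrow> y \<in> A \<Longrightarrow> x \<star> nsmult m y = nsmult m (x \<star> y)"
  by (induction m) (simp_all add: nsmult_Suc star_add_right)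

lemma star_add_left_mod_ideal:
  assumes L_ideal: "brace_ideal L B"
    and a: "a \<in> center_mod (center_mod L)" and b: "b \<in> center_mod (center_mod L)" and x: "x \<in> A"
  shows "\<exists>l\<in>L. (a \<boxplus> b) \<star> x = a \<star> x \<boxplus> b \<star> x \<boxplus> l"
proof -
  let ?b' = "b \<boxplus> minv a \<star> b"
  have Z_ideal: "brace_ideal (center_mod L) B"
    using center_mod_ideal[OF L_ideal] .
  have aA: "a \<in> A" and bA: "b \<in> A"
    using a b center_mod_subset by auto
  have c: "minv a \<star> b \<in> center_mod L"
    using b aA by (simp add: center_mod_def)
  then have "?b' \<in> center_mod (center_mod L)"
    using ideal_add[OF center_mod_ideal[OF Z_ideal] b] ideal_subset_center_mod[OF Z_ideal] by auto
  then have "?b' \<star> x \<in> center_mod L"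
    using x by (simp add: center_mod_def)
  then have ab'x: "a \<star> (?b' \<star> x) \<in> L"
    using aA by (simp add: center_mod_def)
  obtain l where l: "l \<in> L" "?b' \<star> x = b \<star> x \<boxplus> l"
    using star_add_center_mod_left[OF L_ideal bA x c] by blast
  have "(a \<boxplus> b) \<star> x = a \<star> (?b' \<star> x) \<boxplus> a \<star> x \<boxplus> ?b' \<star> x"
    using add_eq_mul[OF aA bA] star_mul_left[of a ?b' x] aA bA x by simp
  also have "\<dots> = a \<star> x \<boxplus> b \<star> x \<boxplus> (a \<star> (?b' \<star> x) \<boxplus> l)"
    unfolding l(2) using aA bA x l ab'x ideal_carrier[OF L_ideal] by (simp add: add_ac)
  finally show ?thesis
    using ab'x l ideal_add[OF L_ideal] by blast
qed

lemma star_nsmult_left_mod_ideal: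
  assumes L_ideal: "brace_ideal L B" and a: "a \<in> center_mod (center_mod L)" and x: "x \<in> A"
  shows "\<exists>l\<in>L. nsmult m a \<star> x = nsmult m (a \<star> x) \<boxplus> l"
proof (induction m)
  case 0
  then show ?case
    using x ideal_zero[OF L_ideal] by (intro bexI[of _ zero]) simp_all
next
  case (Suc m)
  have aA: "a \<in> A"
    using a center_mod_subset by auto
  obtain l where l: "l \<in> L" "nsmult m a \<star> x = nsmult m (a \<star> x) \<boxplus> l"
    using Suc by blast
  have "nsmult m a \<in> center_mod (center_mod L)"
    using ideal_nsmult[OF center_mod_ideal[OF center_mod_ideal[OF L_ideal]] a] .
  then obtain l' where l': "l' \<in> L" "(nsmult m a \<boxplus> a) \<star> x = nsmult m a \<star> x \<boxplus> a \<star> x \<boxplus> l'"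
    using star_add_left_mod_ideal[OF L_ideal _ a x] by blast
  have "nsmult (Suc m) a \<star> x = nsmult (Suc m) (a \<star> x) \<boxplus> (l \<boxplus> l')"
    using l l' aA x ideal_carrier[OF L_ideal] by (simp add: nsmult_Suc add_ac)
  then show ?case
    using l l' ideal_add[OF L_ideal] by blast
qed

context
  assumes torsion_free: "add_torsion_free B (star_center B)"
begin

lemma zeta_Suc_nsmult_cancel:
  "y \<in> zeta (Suc k) \<Longrightarrow> 0 < m \<Longrightarrow> nsmult m y \<in> zeta k \<Longrightarrow> y \<in> zeta k"
proof (induction k arbitrary: y)
  case 0
  then show ?case
    using torsion_free zeta_one_eq_star_center unfolding add_torsion_free_def by auto
next
  case (Suc k)
  have yA: "y \<in> A"
    using Suc.prems(1) zeta_subset by blast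
  have "x \<star> y \<in> zeta k \<and> y \<star> x \<in> zeta k" if x: "x \<in> A" for x
  proof
    have "x \<star> nsmult m y \<in> zeta k"
      using Suc.prems(3) x by (simp add: zeta_Suc center_mod_def)
    then show "x \<star> y \<in> zeta k"
      using Suc.IH[of "x \<star> y"] Suc.prems x star_nsmult_right[OF x yA]
      by (simp add: zeta_Suc center_mod_def)
    have "y \<in> center_mod (center_mod (zeta k))"
      using Suc.prems(1) by (simp add: zeta_Suc)
    then obtain l where l: "l \<in> zeta k" "nsmult m y \<star> x = nsmult m (y \<star> x) \<boxplus> l"
      using star_nsmult_left_mod_ideal[OF zeta_ideal _ x] by blast
    have "nsmult m y \<star> x \<in> zeta k"
      using Suc.prems(3) x by (simp add: zeta_Suc center_mod_def)
    moreover have "nsmult m (y \<star> x) = nsmult m y \<star> x \<boxplus> neg l"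
      using l ideal_carrier[OF zeta_ideal] yA x by (simp add: add_assoc)
    ultimately have "nsmult m (y \<star> x) \<in> zeta k"
      using l(1) ideal_add[OF zeta_ideal] ideal_neg[OF zeta_ideal] by simp
    then show "y \<star> x \<in> zeta k"
      using Suc.IH[of "y \<star> x"] Suc.prems x by (simp add: zeta_Suc center_mod_def)
  qed
  then show ?case
    using yA by (simp add: zeta_Suc center_mod_def)
qed

lemma zsmult_in_br_star_imp_zero:
  "a \<in> zeta j \<Longrightarrow> k \<noteq> 0 \<Longrightarrow> zsmult k a \<in> br B (a \<star> a) \<Longrightarrow> a = zero"
proof (induction j)
  case (Suc j)
  have "zsmult k a \<in> zeta j"
    using Suc.prems br_star_subset_zeta by blast
  then have "nsmult (nat \<bar>k\<bar>) a \<in> zeta j"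
    using ideal_nsmult_abs[OF zeta_ideal] Suc.prems(1) zeta_subset by blast
  moreover have "0 < nat \<bar>k\<bar>"
    using Suc.prems(2) by simp
  ultimately have "a \<in> zeta j"
    using zeta_Suc_nsmult_cancel Suc.prems(1) by blast
  then show ?case
    using Suc.IH Suc.prems by blast
qed simp

lemma cyc_inter_br_star:
  assumes a: "a \<in> zeta n"
  shows "cyc B a \<inter> br B (a \<star> a) \<subseteq> {zero}"
proof
  fix q assume q: "q \<in> cyc B a \<inter> br B (a \<star> a)"
  then obtain k where k: "q = zsmult k a"
    using cyc_eq_zsmult a zeta_subset by blast
  show "q \<in> {zero}"
  proof (cases "k = 0")
    case False
    then have "a = zero"
      using zsmult_in_br_star_imp_zero a q k by blast
    then show ?thesis
      using k additive.int_pow_one by simp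
  qed (use k in simp)
qed

lemma sum_is_direct_cyc:
  assumes T: "T_brace B" and "a \<in> zeta n" "s 1 = a" "\<forall>i\<ge>1. s (Suc i) = s i \<star> s i"
  shows "sum_is_direct B (\<lambda>i. cyc B (s i)) {1..n}"
  using assms(2-)
proof (induction n arbitrary: a s)
  case 0
  then show ?case
    by (simp add: sum_is_direct_def)
next
  case (Suc n)
  have aA: "a \<in> A"
    using Suc.prems(1) zeta_subset by blast
  have tail: "s (Suc 1) = a \<star> a" "\<forall>i\<ge>1. s (Suc (Suc i)) = s (Suc i) \<star> s (Suc i)"
    using Suc.prems by simp_all
  have br_tail: "br B (a \<star> a) = subgroup_sum B (\<lambda>i. cyc B (s (Suc i))) {1..n}"
    using br_eq_subgroup_sum[OF T star_self_zeta_Suc[OF Suc.prems(1)] tail] .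
  show ?case
  proof (rule sum_is_direct_Suc)
    show "cyc B (s i) \<subseteq> A" if "i \<in> {1..Suc n}" for i
      using cyc_subset star_seq_carrier[OF aA Suc.prems(2,3)] that by simp
    show "subgroup (subgroup_sum B (\<lambda>i. cyc B (s (Suc i))) {1..n}) (add_group B)"
      using subbrace_add_subgroup[OF br_subbrace[OF star_closed[OF aA aA]]] br_tail by simp
    show "cyc B (s 1) \<inter> subgroup_sum B (\<lambda>i. cyc B (s (Suc i))) {1..n} \<subseteq> {zero}"
      using cyc_inter_br_star[OF Suc.prems(1)] br_tail Suc.prems(2) by simp
    show "sum_is_direct B (\<lambda>i. cyc B (s (Suc i))) {1..n}"
      using Suc.IH[OF star_self_zeta_Suc[OF Suc.prems(1)] tail] .
  qed
qed

end

end

theorem lemma3p5: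
  fixes B :: "('a, 'b) brace_struct_scheme" and a :: 'a and n :: nat
    and s :: "nat \<Rightarrow> 'a"
  assumes "is_brace B" and "T_brace B"
    and "a \<in> upper_star_center B n"
    and "s 1 = a"
    and "\<forall>i\<ge>1. s (Suc i) = star B (s i) (s i)"
  shows "brace_ideal (br B a) B
         \<and> br B a = subgroup_sum B (\<lambda>i. cyc B (s i)) {1..n}
         \<and> (add_torsion_free B (star_center B)
              \<longrightarrow> br B a = subgroup_sum B (\<lambda>i. cyc B (s i)) {1..n}
                  \<and> sum_is_direct B (\<lambda>i. cyc B (s i)) {1..n})"
proof -
  interpret brace B
    by (rule brace.intro) (rule assms(1))
  have "brace_ideal (br B a) B"
    using br_ideal_if_zeta assms(2,3) .
  moreover have "br B a = subgroup_sum B (\<lambda>i. cyc B (s i)) {1..n}"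
    using br_eq_subgroup_sum assms(2-5) .
  moreover have "add_torsion_free B (star_center B) \<longrightarrow> sum_is_direct B (\<lambda>i. cyc B (s i)) {1..n}"
    using sum_is_direct_cyc assms(2-5) by blast
  ultimately show ?thesis
    by blast
qed

end
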